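(* Let $S_n$ be the star on $n$ vertices with edge set $E$, let $f=\{i,j\}\notin E$ be a pair of distinct vertices, and let $B=E\cup\{f\}$. Let $\det(xI-\mathfrak{D}_2(S_n)[B,B])=\sum_{k=0}^n a_kx^k$ and let $|a_t|=\max_k|a_k|$. Then $\lfloor\frac{n-2}{2}\rfloor\le t\le\lceil\frac n2\rceil$.
   Context: For a tree $T$, let $\mathcal{V}_2$ be the set of 2-element vertex subsets (edges regarded as elements of $\mathcal{V}_2$). The 2-Steiner distance matrix $\mathfrak{D}_2(T)$ is indexed by $\mathcal{V}_2$, with entry in row $\{i,j\}$, column $\{k,l\}$ equal to the minimum number of edges of a connected subtree of $T$ whose vertex set contains $i,j,k,l$. $M[B,B]$ denotes the principal submatrix with rows and columns indexed by $B$. *)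

theory Defs
  imports "Jordan_Normal_Form.Char_Poly"
begin

text \<open>Graphs are given by a set of (2-element) edges.  A subgraph with vertex set U and
edge set F is connected if any two vertices of U are joined by a walk using edges of F.\<close>

definition sg_connected :: "'a set \<Rightarrow> 'a set set \<Rightarrow> bool" where
  "sg_connected U F \<longleftrightarrow>
     (\<forall>x\<in>U. \<forall>y\<in>U. (x, y) \<in> ({(a, b). {a, b} \<in> F})\<^sup>*)"

definition steiner_dist :: "'a set set \<Rightarrow> 'a set \<Rightarrow> nat" where
  "steiner_dist E W = Min {card F | F U. F \<subseteq> E \<and> W \<subseteq> U \<and> (\<forall>e\<in>F. e \<subseteq> U)
                                    \<and> sg_connected U F}"

text \<open>2-Steiner distance matrix entry for rows/columns indexed by 2-subsets.\<close>

definition steiner2 :: "'a set set \<Rightarrow> 'a set \<Rightarrow> 'a set \<Rightarrow> int" where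
  "steiner2 E p q = int (steiner_dist E (p \<union> q))"

definition star_edges :: "nat \<Rightarrow> nat set set" where
  "star_edges n = {{0, k} | k. 1 \<le> k \<and> k < n}"

end

theory Submission
  imports Defs
begin

text \<open>
  In a star the Steiner distance of a vertex set with at least two elements is the number of
  its non-central vertices.  Hence the entry of \<open>D\<^sub>2[B,B]\<close> at two elements of \<open>B\<close> only
  depends on whether each of them is the extra edge \<open>{i,j}\<close>, one of \<open>{0,i}\<close>, \<open>{0,j}\<close>,
  or another star edge.  Differences of indicator vectors of interchangeable elements of \<open>B\<close>
  are eigenvectors for the eigenvalue \<open>-1\<close>; splitting them off leaves a \<open>3\<times>3\<close> quotient,
  and the characteristic polynomial is \<open>(x+1)\<^sup>N q(x)\<close> with \<open>N = n-3\<close> and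
  \<open>q(x) = x\<^sup>3 - (2N+4)x\<^sup>2 - 7(N+1)x - (N+2)\<close>.  Up to sign its coefficients are nonnegative
  combinations of the binomial coefficients \<open>N choose k\<close>, which increase up to
  \<open>k \<approx> (N+1)/2\<close> and decrease afterwards, except for the leading coefficient \<open>1\<close>.
\<close>

section \<open>Steiner distances in a star\<close>

lemma star_edges_eq_image: "star_edges n = (\<lambda>k. {0, k}) ` {1..<n}"
  unfolding star_edges_def by auto

lemma finite_star_edges: "finite (star_edges n)"
  by (simp add: star_edges_eq_image)

lemma doubleton_0_in_star_edges_iff: "{0, k} \<in> star_edges n \<longleftrightarrow> 1 \<le> k \<and> k < n"
  unfolding star_edges_def by (auto simp: doubleton_eq_iff)

lemma non_star_edge_avoids_centre:
  assumes "i < n" "j < n" "i \<noteq> j" "{i, j} \<notin> star_edges n"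
  shows "1 \<le> i" "1 \<le> j"
proof -
  have "{0, k} \<notin> star_edges n \<Longrightarrow> k < n \<Longrightarrow> k = 0" for k
    by (simp add: doubleton_0_in_star_edges_iff)
  then have "i \<noteq> 0" "j \<noteq> 0"
    using assms by (metis insert_commute)+
  then show "1 \<le> i" "1 \<le> j" by simp_all
qed

lemma sg_connected_star: "sg_connected (insert c L) ((\<lambda>l. {c, l}) ` L)"
  unfolding sg_connected_def
proof (intro ballI)
  let ?R = "{(a, b). {a, b} \<in> (\<lambda>l. {c, l}) ` L}"
  have to_centre: "(x, c) \<in> ?R\<^sup>*" and from_centre: "(c, x) \<in> ?R\<^sup>*" if "x \<in> insert c L" for x
  proof -
    have "x = c \<or> ((x, c) \<in> ?R \<and> (c, x) \<in> ?R)"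
      using that by (auto simp: insert_commute)
    then show "(x, c) \<in> ?R\<^sup>*" "(c, x) \<in> ?R\<^sup>*" by auto
  qed
  fix x y assume "x \<in> insert c L" "y \<in> insert c L"
  then show "(x, y) \<in> ?R\<^sup>*"
    using to_centre from_centre by (meson rtrancl_trans)
qed

lemma star_subgraph_contains_edge:
  assumes F: "F \<subseteq> star_edges n" and con: "sg_connected U F"
    and l: "l \<in> U" "l \<noteq> 0" and w: "w \<in> U" "w \<noteq> l"
  shows "{0, l} \<in> F"
proof -
  have "(l, w) \<in> ({(a, b). {a, b} \<in> F})\<^sup>*"
    using con l w unfolding sg_connected_def by auto
  then obtain y where "{l, y} \<in> F"
    using w(2) by (cases rule: converse_rtranclE) auto
  moreover from this F obtain k where "{l, y} = {0, k}"
    unfolding star_edges_def by auto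
  ultimately show ?thesis
    using l(2) by (auto simp: doubleton_eq_iff insert_commute)
qed

lemma steiner_dist_star:
  assumes W: "W \<subseteq> {..<n}" and a: "a \<in> W" and b: "b \<in> W" "a \<noteq> b"
  shows "steiner_dist (star_edges n) W = card (W - {0})"
proof -
  let ?S = "{card F | F U. F \<subseteq> star_edges n \<and> W \<subseteq> U \<and> (\<forall>e\<in>F. e \<subseteq> U) \<and> sg_connected U F}"
  let ?F0 = "(\<lambda>l. {0, l}) ` (W - {0})"
  have "?F0 \<subseteq> star_edges n"
    using W by (auto simp: doubleton_0_in_star_edges_iff)
  moreover have "sg_connected (insert 0 W) ?F0"
    using sg_connected_star[of 0 "W - {0}"] by (simp add: insert_Diff_single)
  moreover have "card ?F0 = card (W - {0})"
    by (rule card_image) (auto simp: inj_on_def doubleton_eq_iff)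
  moreover have "\<forall>e\<in>?F0. e \<subseteq> insert 0 W" by auto
  ultimately have witness: "card (W - {0}) \<in> ?S"
    unfolding mem_Collect_eq by (intro exI[of _ ?F0] exI[of _ "insert 0 W"]) auto
  have lower: "card (W - {0}) \<le> card F"
    if F: "F \<subseteq> star_edges n" and WU: "W \<subseteq> U" and con: "sg_connected U F" for F U
  proof -
    have "?F0 \<subseteq> F"
    proof
      fix e assume "e \<in> ?F0"
      then obtain l where l: "l \<in> W" "l \<noteq> 0" and e: "e = {0, l}" by auto
      obtain w where "w \<in> W" "w \<noteq> l" using a b by (cases "a = l") auto
      then show "e \<in> F"
        using star_subgraph_contains_edge[OF F con] l WU e by auto
    qed
    moreover have "finite F" using F finite_star_edges finite_subset by blast
    ultimately have "card ?F0 \<le> card F" by (rule card_mono[rotated])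
    then show ?thesis
      by (simp add: card_image inj_on_def doubleton_eq_iff)
  qed
  have "finite ?S"
    by (rule finite_subset[of _ "card ` Pow (star_edges n)"]) (auto simp: finite_star_edges)
  then have "Min ?S = card (W - {0})"
  proof (rule Min_eqI[OF _ _ witness])
    fix s assume "s \<in> ?S"
    then show "card (W - {0}) \<le> s" using lower by auto
  qed
  then show ?thesis unfolding steiner_dist_def .
qed

lemma steiner2_star:
  assumes "e \<subseteq> {..<n}" "e' \<subseteq> {..<n}" "card e = 2"
  shows "steiner2 (star_edges n) e e' = int (card (e \<union> e' - {0}))"
proof -
  obtain a b where "e = {a, b}" "a \<noteq> b" using assms(3) card_2_iff by metis
  then show ?thesis
    unfolding steiner2_def using assms by (subst steiner_dist_star[of _ n a b]) auto
qed

section \<open>Characteristic polynomials\<close>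

lemma char_poly_permute:
  fixes A :: "'a :: comm_ring_1 mat"
  assumes A: "A \<in> carrier_mat n n" and p: "p permutes {0..<n}"
  shows "char_poly (mat n n (\<lambda>(r, s). A $$ (p r, p s))) = char_poly A"
proof -
  let ?C = "char_poly_matrix A"
  let ?Cc = "mat n n (\<lambda>(r, s). ?C $$ (r, p s))"
  have C: "?C \<in> carrier_mat n n" using A by simp
  have pn: "p r < n" if "r < n" for r
    using permutes_in_image[OF p] that by simp
  have "char_poly_matrix (mat n n (\<lambda>(r, s). A $$ (p r, p s))) = mat n n (\<lambda>(r, s). ?Cc $$ (p r, s))"
    using A pn permutes_inj[OF p] by (auto simp: char_poly_matrix_def inj_eq)
  then have "char_poly (mat n n (\<lambda>(r, s). A $$ (p r, p s))) = signof p * det ?Cc"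
    unfolding char_poly_def by (simp add: det_permute_rows[OF _ p])
  also have "?Cc = transpose_mat (mat n n (\<lambda>(r, s). transpose_mat ?C $$ (p r, s)))"
    using C pn by (intro eq_matI) auto
  also have "det \<dots> = signof p * det (transpose_mat ?C)"
    by (subst det_transpose[of _ n]) (auto intro: det_permute_rows[OF _ p] simp: A)
  also have "det (transpose_mat ?C) = char_poly A"
    unfolding char_poly_def using A by (simp add: det_transpose[of _ n])
  finally show ?thesis by (simp add: sign_def)
qed

lemma char_poly_mat_reindex:
  fixes g :: "'b \<Rightarrow> 'b \<Rightarrow> 'a :: comm_ring_1"
  assumes b: "bij_betw b {0..<n} X" and \<rho>: "bij_betw \<rho> {0..<n} X"
  shows "char_poly (mat n n (\<lambda>(r, s). g (b r) (b s)))
    = char_poly (mat n n (\<lambda>(r, s). g (\<rho> r) (\<rho> s)))"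
proof -
  define p where "p r = (if r < n then inv_into {0..<n} \<rho> (b r) else r)" for r
  have "bij_betw (inv_into {0..<n} \<rho> \<circ> b) {0..<n} {0..<n}"
    using b bij_betw_inv_into[OF \<rho>] by (rule bij_betw_trans)
  then have "bij_betw p {0..<n} {0..<n}"
    by (rule bij_betw_cong[THEN iffD1, rotated]) (simp add: p_def)
  then have perm: "p permutes {0..<n}"
    by (rule bij_imp_permutes) (simp add: p_def)
  have "\<rho> (p r) = b r" if "r < n" for r
    using that bij_betw_inv_into_right[OF \<rho>] bij_betwE[OF b] by (simp add: p_def)
  then have "mat n n (\<lambda>(r, s). g (b r) (b s))
      = mat n n (\<lambda>(r, s). mat n n (\<lambda>(r, s). g (\<rho> r) (\<rho> s)) $$ (p r, p s))"
    using permutes_in_image[OF perm] by (auto intro!: eq_matI)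
  then show ?thesis
    by (simp add: char_poly_permute[OF _ perm])
qed

lemma char_poly_four_block_upper_right_zero:
  fixes A1 :: "'a :: idom mat"
  assumes A1: "A1 \<in> carrier_mat m m" and A3: "A3 \<in> carrier_mat k m" and A4: "A4 \<in> carrier_mat k k"
  shows "char_poly (four_block_mat A1 (0\<^sub>m m k) A3 A4) = char_poly A1 * char_poly A4"
proof -
  let ?cm = "\<lambda>A. [:0, 1:] \<cdot>\<^sub>m 1\<^sub>m (dim_row A) + map_mat (\<lambda>a. [:- a:]) A"
  have "?cm (four_block_mat A1 (0\<^sub>m m k) A3 A4)
      = four_block_mat (?cm A1) (0\<^sub>m m k) (map_mat (\<lambda>a. [:- a:]) A3) (?cm A4)"
    using A1 A3 A4 by (intro eq_matI) auto
  moreover have "det \<dots> = det (?cm A1) * det (?cm A4)"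
    using A1 A3 A4 by (intro det_four_block_mat_upper_right_zero) auto
  ultimately show ?thesis
    unfolding char_poly_defs by simp
qed

lemma char_poly_smult_one: "char_poly (a \<cdot>\<^sub>m 1\<^sub>m k) = [:- a, 1:] ^ k"
proof -
  have "char_poly (a \<cdot>\<^sub>m 1\<^sub>m k) = (\<Prod>b\<leftarrow>diag_mat (a \<cdot>\<^sub>m 1\<^sub>m k). [:- b, 1:])"
    by (rule char_poly_upper_triangular[of _ k]) (auto simp: upper_triangular_def)
  also have "diag_mat (a \<cdot>\<^sub>m 1\<^sub>m k) = replicate k a"
    by (simp add: diag_mat_def list_eq_iff_nth_eq)
  finally show ?thesis by (simp add: prod_list_replicate)
qed

lemma char_poly_trailing_scalar_columns:
  fixes B :: "'a :: idom mat"
  assumes B: "B \<in> carrier_mat n n" and "m \<le> n"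
    and cols: "\<And>r c. r < n \<Longrightarrow> m \<le> c \<Longrightarrow> c < n \<Longrightarrow>
      B $$ (r, c) = (if r = c then a else 0)"
  shows "char_poly B = [:- a, 1:] ^ (n - m) * char_poly (mat m m (\<lambda>(r, c). B $$ (r, c)))"
proof -
  let ?k = "n - m"
  let ?B1 = "mat m m (\<lambda>(r, c). B $$ (r, c))"
  let ?B3 = "mat ?k m (\<lambda>(r, c). B $$ (m + r, c))"
  have blocks: "B = four_block_mat ?B1 (0\<^sub>m m ?k) ?B3 (a \<cdot>\<^sub>m 1\<^sub>m ?k)"
    using B \<open>m \<le> n\<close> cols by (intro eq_matI) auto
  have "char_poly B = char_poly ?B1 * char_poly (a \<cdot>\<^sub>m 1\<^sub>m ?k)"
    by (subst blocks, rule char_poly_four_block_upper_right_zero) auto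
  then show ?thesis
    by (simp add: char_poly_smult_one mult.commute)
qed

definition shear_mat :: "nat \<Rightarrow> nat \<Rightarrow> (nat \<Rightarrow> nat) \<Rightarrow> 'a :: comm_ring_1 \<Rightarrow> 'a mat" where
  "shear_mat n m p a = mat n n (\<lambda>(r, c). (if r = c then 1 else 0) + (if m \<le> c \<and> r = p c then a else 0))"

context
  fixes n m :: nat and p :: "nat \<Rightarrow> nat"
  assumes p: "\<And>c. m \<le> c \<Longrightarrow> c < n \<Longrightarrow> p c < m"
begin

lemma shear_mat_mult_right:
  assumes X: "X \<in> carrier_mat n n" and "r < n" "c < n"
  shows "(X * shear_mat n m p a) $$ (r, c) = X $$ (r, c) + (if m \<le> c then a * X $$ (r, p c) else 0)"
proof -
  have "(X * shear_mat n m p a) $$ (r, c)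
      = (\<Sum>k = 0..<n. (if k = c then X $$ (r, k) else 0) + (if m \<le> c \<and> k = p c then a * X $$ (r, k) else 0))"
    using assms unfolding shear_mat_def by (auto simp: scalar_prod_def algebra_simps intro!: sum.cong)
  also have "\<dots> = X $$ (r, c) + (if m \<le> c then a * X $$ (r, p c) else 0)"
    using assms p[of c] by (auto simp: sum.distrib sum.delta')
  finally show ?thesis .
qed

lemma shear_mat_mult_left:
  assumes X: "X \<in> carrier_mat n n" and "r < n" "c < n"
  shows "(shear_mat n m p a * X) $$ (r, c) = X $$ (r, c) + a * (\<Sum>k\<in>{k\<in>{m..<n}. p k = r}. X $$ (k, c))"
proof -
  have "(shear_mat n m p a * X) $$ (r, c)
      = (\<Sum>k = 0..<n. (if k = r then X $$ (k, c) else 0) + (if m \<le> k \<and> p k = r then a * X $$ (k, c) else 0))"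
    using assms unfolding shear_mat_def by (auto simp: scalar_prod_def algebra_simps intro!: sum.cong)
  also have "\<dots> = X $$ (r, c) + (\<Sum>k = 0..<n. if m \<le> k \<and> p k = r then a * X $$ (k, c) else 0)"
    using assms by (simp add: sum.distrib sum.delta')
  also have "(\<Sum>k = 0..<n. if m \<le> k \<and> p k = r then a * X $$ (k, c) else 0)
      = (\<Sum>k\<in>{k\<in>{0..<n}. m \<le> k \<and> p k = r}. a * X $$ (k, c))"
    by (rule sum.inter_filter[symmetric]) simp
  also have "{k\<in>{0..<n}. m \<le> k \<and> p k = r} = {k\<in>{m..<n}. p k = r}"
    by auto
  finally show ?thesis by (simp add: sum_distrib_left)
qed

lemma shear_mat_inverse: "shear_mat n m p a * shear_mat n m p (- a) = 1\<^sub>m n"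
proof (rule eq_matI)
  fix r c assume "r < dim_row (1\<^sub>m n)" "c < dim_col (1\<^sub>m n)"
  then show "(shear_mat n m p a * shear_mat n m p (- a)) $$ (r, c) = 1\<^sub>m n $$ (r, c)"
    using p[of c] by (subst shear_mat_mult_right) (auto simp: shear_mat_def)
qed (auto simp: shear_mat_def)

lemma similar_mat_shear_conj:
  assumes A: "A \<in> carrier_mat n n"
  shows "similar_mat A (shear_mat n m p 1 * A * shear_mat n m p (- 1))"
proof -
  let ?S = "shear_mat n m p (1 :: 'a)" and ?S' = "shear_mat n m p (- 1 :: 'a)"
  have S: "?S \<in> carrier_mat n n" "?S' \<in> carrier_mat n n"
    by (simp_all add: shear_mat_def)
  have inv: "?S * ?S' = 1\<^sub>m n" "?S' * ?S = 1\<^sub>m n"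
    using shear_mat_inverse[of 1] shear_mat_inverse[of "- 1"] by simp_all
  show ?thesis
  proof (rule similar_matI[where P = ?S' and Q = ?S and n = n])
    have "?S' * (?S * A * ?S') * ?S = (?S' * ?S) * A * (?S' * ?S)"
      using A S by (simp add: assoc_mult_mat[of _ n n _ n _ n])
    then show "A = ?S' * (?S * A * ?S') * ?S"
      using A inv by simp
  qed (use A S inv in auto)
qed

lemma shear_conj_index:
  assumes A: "A \<in> carrier_mat n n" and rc: "r < n" "c < n"
  shows "(shear_mat n m p 1 * A * shear_mat n m p (- 1)) $$ (r, c)
    = A $$ (r, c) + (\<Sum>k\<in>{k\<in>{m..<n}. p k = r}. A $$ (k, c))
      - (if m \<le> c then A $$ (r, p c) + (\<Sum>k\<in>{k\<in>{m..<n}. p k = r}. A $$ (k, p c)) else 0)"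
proof -
  let ?SA = "shear_mat n m p 1 * A"
  have "(?SA * shear_mat n m p (- 1)) $$ (r, c)
      = ?SA $$ (r, c) + (if m \<le> c then - 1 * ?SA $$ (r, p c) else 0)"
    by (rule shear_mat_mult_right) (use rc A in \<open>auto simp: shear_mat_def\<close>)
  moreover have "m \<le> c \<Longrightarrow> p c < n"
    using rc p[of c] by simp
  ultimately show ?thesis
    using rc A by (simp add: shear_mat_mult_left del: index_mult_mat)
qed

text \<open>The hypothesis says that \<open>e\<^sub>c - e\<^bsub>p c\<^esub>\<close> is an eigenvector for \<open>a\<close> whenever \<open>m \<le> c\<close>;
  conjugation by the shear turns these eigenvectors into the last \<open>n - m\<close> unit vectors.\<close>

lemma char_poly_eigen_differences:
  fixes A :: "'a :: idom mat"
  assumes A: "A \<in> carrier_mat n n" and "m \<le> n"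
    and eigen: "\<And>r c. r < n \<Longrightarrow> m \<le> c \<Longrightarrow> c < n \<Longrightarrow>
      A $$ (r, c) - A $$ (r, p c) = a * ((if r = c then 1 else 0) - (if r = p c then 1 else 0))"
  shows "char_poly A = [:- a, 1:] ^ (n - m) *
    char_poly (mat m m (\<lambda>(r, c). A $$ (r, c) + (\<Sum>k\<in>{k\<in>{m..<n}. p k = r}. A $$ (k, c))))"
proof -
  let ?B = "shear_mat n m p 1 * A * shear_mat n m p (- 1)"
  let ?C = "\<lambda>r. {k\<in>{m..<n}. p k = r}"
  have "?B $$ (r, c) = (if r = c then a else 0)" if "r < n" "m \<le> c" "c < n" for r c
  proof -
    have "?B $$ (r, c) = (A $$ (r, c) - A $$ (r, p c)) + (\<Sum>k\<in>?C r. A $$ (k, c) - A $$ (k, p c))"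
      using that A by (simp add: shear_conj_index sum_subtractf)
    also have "\<dots> = a * ((if r = c then 1 else 0) - (if r = p c then 1 else 0))
        + (\<Sum>k\<in>?C r. a * ((if k = c then 1 else 0) - (if k = p c then 1 else 0)))"
      using that by (simp add: eigen)
    also have "(\<Sum>k\<in>?C r. a * ((if k = c then 1 else 0) - (if k = p c then 1 else 0)))
        = a * (if r = p c then 1 else 0)"
      using that p[of c] by (simp add: sum_distrib_left[symmetric] sum_subtractf sum.delta')
    finally show ?thesis
      using that p[of c] by (auto simp: algebra_simps)
  qed
  then have "char_poly ?B = [:- a, 1:] ^ (n - m) * char_poly (mat m m (\<lambda>(r, c). ?B $$ (r, c)))"
    using A \<open>m \<le> n\<close> by (intro char_poly_trailing_scalar_columns) (auto simp: shear_mat_def)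
  also have "mat m m (\<lambda>(r, c). ?B $$ (r, c))
      = mat m m (\<lambda>(r, c). A $$ (r, c) + (\<Sum>k\<in>?C r. A $$ (k, c)))"
    using A \<open>m \<le> n\<close> by (intro eq_matI) (auto simp: shear_conj_index)
  finally show ?thesis
    using char_poly_similar[OF similar_mat_shear_conj[OF A]] by simp
qed

end

lemma det_mat3:
  fixes g :: "nat \<Rightarrow> nat \<Rightarrow> 'a :: comm_ring_1"
  shows "det (mat 3 3 (\<lambda>(r, c). g r c)) = g 0 0 * (g 1 1 * g 2 2 - g 1 2 * g 2 1)
    - g 1 0 * (g 0 1 * g 2 2 - g 0 2 * g 2 1) + g 2 0 * (g 0 1 * g 1 2 - g 0 2 * g 1 1)"
proof -
  let ?A = "mat 3 3 (\<lambda>(r, c). g r c)"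
  have det2: "det B = B $$ (0, 0) * B $$ (1, 1) - B $$ (1, 0) * B $$ (0, 1)"
    if B: "B \<in> carrier_mat 2 2" for B :: "'a mat"
    using laplace_expansion_column[OF B, of 0] B
    by (simp add: cofactor_def numeral_2_eq_2 det_single mat_delete_def lessThan_Suc)
  have "det ?A = (\<Sum>i<3. ?A $$ (i, 0) * cofactor ?A i 0)"
    by (rule laplace_expansion_column) auto
  then show ?thesis
    by (simp add: numeral_3_eq_3 lessThan_Suc cofactor_def det2 mat_delete_def numeral_2_eq_2 algebra_simps)
qed

lemma char_poly_mat3:
  fixes g :: "nat \<Rightarrow> nat \<Rightarrow> 'a :: comm_ring_1"
  shows "char_poly (mat 3 3 (\<lambda>(r, c). g r c)) =
    [:- (g 0 0 * (g 1 1 * g 2 2 - g 1 2 * g 2 1) - g 1 0 * (g 0 1 * g 2 2 - g 0 2 * g 2 1)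
          + g 2 0 * (g 0 1 * g 1 2 - g 0 2 * g 1 1)),
      g 0 0 * g 1 1 - g 0 1 * g 1 0 + g 0 0 * g 2 2 - g 0 2 * g 2 0 + g 1 1 * g 2 2 - g 1 2 * g 2 1,
      - (g 0 0 + g 1 1 + g 2 2), 1:]"
proof -
  have "char_poly_matrix (mat 3 3 (\<lambda>(r, c). g r c))
      = mat 3 3 (\<lambda>(r, c). (if r = c then [:0, 1:] else 0) + [:- g r c:])"
    by (intro eq_matI) (auto simp: char_poly_matrix_def)
  then show ?thesis
    unfolding char_poly_def by (simp add: det_mat3 algebra_simps)
qed

section \<open>The 2-Steiner matrix of a star plus an edge\<close>

definition cubic_factor :: "nat \<Rightarrow> int poly" where
  "cubic_factor N = [:- (int N + 2), - 7 * (int N + 1), - (2 * int N + 4), 1:]"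

text \<open>Position \<open>0\<close> stands for the extra edge \<open>{i,j}\<close>, positions \<open>1\<close> and \<open>v\<close> for \<open>{0,i}\<close>
  and \<open>{0,j}\<close>, and all other positions for the remaining star edges.\<close>

definition star_model :: "nat \<Rightarrow> nat \<Rightarrow> nat \<Rightarrow> int" where
  "star_model v r s =
    (if r = 0 \<and> s = 0 then 2
     else if r = 0 then (if s = 1 \<or> s = v then 2 else 3)
     else if s = 0 then (if r = 1 \<or> r = v then 2 else 3)
     else if r = s then 1 else 2)"

lemma char_poly_star_model:
  assumes "3 \<le> n"
  shows "char_poly (mat n n (\<lambda>(r, s). star_model (if n = 3 then 2 else 3) r s))
    = [:1, 1:] ^ (n - 3) * cubic_factor (n - 3)"
proof (cases "n = 3")
  case True
  then show ?thesis
    by (simp add: char_poly_mat3 star_model_def cubic_factor_def)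
next
  case False
  then have n: "4 \<le> n" using assms by simp
  define p :: "nat \<Rightarrow> nat" where "p c = (if c = 3 then 1 else 2)" for c
  let ?A = "mat n n (\<lambda>(r, s). star_model 3 r s)"
  let ?fibre = "\<lambda>r. {k\<in>{3..<n}. p k = r}"
  have "char_poly ?A = [:- (- 1), 1:] ^ (n - 3) *
    char_poly (mat 3 3 (\<lambda>(r, c). ?A $$ (r, c) + (\<Sum>k\<in>?fibre r. ?A $$ (k, c))))"
    using n by (intro char_poly_eigen_differences) (auto simp: p_def star_model_def)
  moreover have "?fibre r = (if r = 1 then {3} else if r = 2 then {4..<n} else {})" for r
    using n by (auto simp: p_def)
  moreover have "(\<Sum>k\<in>{4..<n}. ?A $$ (k, c)) = (if c = 0 then 3 else 2) * int (n - 4)" if "c < 3" for c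
    using that by (simp add: star_model_def)
  ultimately have "char_poly ?A = [:1, 1:] ^ (n - 3) * char_poly (mat 3 3 (\<lambda>(r, c).
      star_model 3 r c + (if r = 1 then star_model 3 3 c
        else if r = 2 then (if c = 0 then 3 else 2) * int (n - 4) else 0)))"
    using n by (auto intro!: arg_cong[where f = char_poly] eq_matI)
  then show ?thesis
    using False n by (simp add: char_poly_mat3 star_model_def cubic_factor_def algebra_simps)
qed

lemma bij_betw_extend:
  assumes "finite A" "finite B" "card A = card B"
    and h: "bij_betw h A0 B0" and "A0 \<subseteq> A" "B0 \<subseteq> B"
  obtains g where "bij_betw g A B" "\<And>x. x \<in> A0 \<Longrightarrow> g x = h x"
proof -
  have "card A0 = card B0"
    using h by (rule bij_betw_same_card)
  then have "card (A - A0) = card (B - B0)"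
    using assms by (simp add: card_Diff_subset finite_subset)
  then obtain \<phi> where \<phi>: "bij_betw \<phi> (A - A0) (B - B0)"
    using assms finite_same_card_bij by blast
  have "bij_betw (\<lambda>x. if x \<in> A0 then h x else \<phi> x) (A0 \<union> (A - A0)) (B0 \<union> (B - B0))"
    by (rule bij_betw_disjoint_Un) (use h \<phi> in \<open>auto intro: bij_betw_cong[THEN iffD1, rotated]\<close>)
  moreover have "A0 \<union> (A - A0) = A" "B0 \<union> (B - B0) = B"
    using assms by auto
  ultimately show ?thesis
    using that by auto
qed

lemma card_star_edges_insert:
  assumes "1 \<le> i" "i < n" "1 \<le> j"
  shows "card (star_edges n \<union> {{i, j}}) = n"
proof -
  have "card (star_edges n) = n - 1"
    by (simp add: star_edges_eq_image card_image inj_on_def doubleton_eq_iff)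
  moreover have "{i, j} \<notin> star_edges n"
    using assms by (auto simp: star_edges_def doubleton_eq_iff)
  ultimately show ?thesis
    using assms finite_star_edges by simp
qed

lemma star_plus_edge_enumeration:
  assumes ij: "1 \<le> i" "i < n" "1 \<le> j" "j < n" "i \<noteq> j" and v: "2 \<le> v" "v < n"
  obtains \<rho> where "bij_betw \<rho> {0..<n} (star_edges n \<union> {{i, j}})"
    "\<rho> 0 = {i, j}" "\<rho> 1 = {0, i}" "\<rho> v = {0, j}"
proof -
  define h :: "nat \<Rightarrow> nat set" where "h r = (if r = 0 then {i, j} else if r = 1 then {0, i} else {0, j})" for r
  have h: "bij_betw h {0, 1, v} {{i, j}, {0, i}, {0, j}}"
    unfolding bij_betw_def inj_on_def h_def using ij v by (auto simp: doubleton_eq_iff)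
  have sub: "{{i, j}, {0, i}, {0, j}} \<subseteq> star_edges n \<union> {{i, j}}"
    using ij by (auto simp: doubleton_0_in_star_edges_iff)
  have card: "card {0..<n} = card (star_edges n \<union> {{i, j}})"
    using card_star_edges_insert[OF ij(1,2,3)] by simp
  obtain \<rho> where "bij_betw \<rho> {0..<n} (star_edges n \<union> {{i, j}})"
    "\<And>r. r \<in> {0, 1, v} \<Longrightarrow> \<rho> r = h r"
    using bij_betw_extend[OF _ _ card h _ sub] v finite_star_edges by auto
  then show ?thesis
    using that v by (simp add: h_def)
qed

context
  fixes n i j v :: nat and \<rho> :: "nat \<Rightarrow> nat set"
  assumes ij: "1 \<le> i" "i < n" "1 \<le> j" "j < n" "i \<noteq> j" and v: "2 \<le> v" "v < n"
    and \<rho>: "bij_betw \<rho> {0..<n} (star_edges n \<union> {{i, j}})"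
      "\<rho> 0 = {i, j}" "\<rho> 1 = {0, i}" "\<rho> v = {0, j}"
begin

lemma star_enumeration_eq_iff: "r < n \<Longrightarrow> s < n \<Longrightarrow> \<rho> r = \<rho> s \<longleftrightarrow> r = s"
  using inj_on_eq_iff[OF bij_betw_imp_inj_on[OF \<rho>(1)]] by simp

lemma star_enumeration_in: "r < n \<Longrightarrow> \<rho> r \<in> star_edges n \<union> {{i, j}}"
  using bij_betwE[OF \<rho>(1)] by simp

lemma star_enumeration_leaf:
  assumes r: "r < n" "r \<noteq> 0"
  obtains k where "\<rho> r = {0, k}" "1 \<le> k" "(k = i \<or> k = j) \<longleftrightarrow> (r = 1 \<or> r = v)"
proof -
  have "\<rho> r \<noteq> {i, j}"
    using star_enumeration_eq_iff[of r 0] \<rho>(2) r by auto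
  then obtain k where k: "\<rho> r = {0, k}" "1 \<le> k"
    using star_enumeration_in[OF r(1)] by (auto simp: star_edges_def)
  have "k = i \<longleftrightarrow> r = 1" "k = j \<longleftrightarrow> r = v"
    using star_enumeration_eq_iff[of r 1] star_enumeration_eq_iff[of r v] \<rho>(3,4) k(1) r v ij(2,4)
    by (auto simp: doubleton_eq_iff)
  then show ?thesis
    using that k by blast
qed

lemma steiner2_eq_star_model:
  assumes rs: "r < n" "s < n"
  shows "steiner2 (star_edges n) (\<rho> r) (\<rho> s) = star_model v r s"
proof -
  have "\<rho> r \<subseteq> {..<n}" "\<rho> s \<subseteq> {..<n}" "card (\<rho> r) = 2"
    using star_enumeration_in[OF rs(1)] star_enumeration_in[OF rs(2)] ij by (auto simp: star_edges_def)
  then have dist: "steiner2 (star_edges n) (\<rho> r) (\<rho> s) = int (card (\<rho> r \<union> \<rho> s - {0}))"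
    by (rule steiner2_star)
  have triangle: "card ({i, j} \<union> {0, k} - {0}) = (if k = i \<or> k = j then 2 else 3)"
    "card ({0, k} \<union> {i, j} - {0}) = (if k = i \<or> k = j then 2 else 3)" if "1 \<le> k" for k
  proof -
    have "{i, j} \<union> {0, k} - {0} = {i, j, k}" "{0, k} \<union> {i, j} - {0} = {i, j, k}"
      using ij that by auto
    then show "card ({i, j} \<union> {0, k} - {0}) = (if k = i \<or> k = j then 2 else 3)"
      "card ({0, k} \<union> {i, j} - {0}) = (if k = i \<or> k = j then 2 else 3)"
      using ij by (simp_all add: card_insert_if)
  qed
  consider "r = 0" "s = 0" | "r = 0" "s \<noteq> 0" | "r \<noteq> 0" "s = 0" | "r \<noteq> 0" "s \<noteq> 0"
    by blast
  then show ?thesis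
  proof cases
    case 1
    then show ?thesis using dist \<rho>(2) ij by (simp add: star_model_def)
  next
    case 2
    obtain k where "\<rho> s = {0, k}" "1 \<le> k" "(k = i \<or> k = j) \<longleftrightarrow> (s = 1 \<or> s = v)"
      using 2(2) by (rule star_enumeration_leaf[OF rs(2)])
    then show ?thesis using 2 dist \<rho>(2) triangle by (simp add: star_model_def)
  next
    case 3
    obtain k where "\<rho> r = {0, k}" "1 \<le> k" "(k = i \<or> k = j) \<longleftrightarrow> (r = 1 \<or> r = v)"
      using 3(1) by (rule star_enumeration_leaf[OF rs(1)])
    then show ?thesis using 3 dist \<rho>(2) triangle by (simp add: star_model_def)
  next
    case 4
    obtain k where k: "\<rho> r = {0, k}" "1 \<le> k"
      using star_enumeration_leaf[OF rs(1) 4(1)] by blast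
    obtain k' where k': "\<rho> s = {0, k'}" "1 \<le> k'"
      using star_enumeration_leaf[OF rs(2) 4(2)] by blast
    have "\<rho> r \<union> \<rho> s - {0} = {k, k'}"
      using k k' by auto
    moreover have "k = k' \<longleftrightarrow> r = s"
      using star_enumeration_eq_iff[OF rs] k k' by (auto simp: doubleton_eq_iff)
    ultimately show ?thesis using 4 dist by (cases "r = s") (simp_all add: star_model_def)
  qed
qed

end

lemma char_poly_steiner2_star_plus_edge:
  assumes ij: "1 \<le> i" "i < n" "1 \<le> j" "j < n" "i \<noteq> j"
    and b: "bij_betw b {0..<n} (star_edges n \<union> {{i, j}})"
  shows "char_poly (mat n n (\<lambda>(r, s). steiner2 (star_edges n) (b r) (b s)))
    = [:1, 1:] ^ (n - 3) * cubic_factor (n - 3)"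
proof -
  have "3 \<le> n" using ij by linarith
  define v :: nat where "v = (if n = 3 then 2 else 3)"
  have v: "2 \<le> v" "v < n"
    using \<open>3 \<le> n\<close> by (auto simp: v_def)
  obtain \<rho> where \<rho>: "bij_betw \<rho> {0..<n} (star_edges n \<union> {{i, j}})"
    "\<rho> 0 = {i, j}" "\<rho> 1 = {0, i}" "\<rho> v = {0, j}"
    using star_plus_edge_enumeration[OF ij v] by blast
  have "char_poly (mat n n (\<lambda>(r, s). steiner2 (star_edges n) (b r) (b s)))
      = char_poly (mat n n (\<lambda>(r, s). steiner2 (star_edges n) (\<rho> r) (\<rho> s)))"
    by (rule char_poly_mat_reindex[OF b \<rho>(1)])
  also have "mat n n (\<lambda>(r, s). steiner2 (star_edges n) (\<rho> r) (\<rho> s))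
      = mat n n (\<lambda>(r, s). star_model v r s)"
    by (intro eq_matI) (auto simp: steiner2_eq_star_model[OF ij v \<rho>])
  also have "char_poly \<dots> = [:1, 1:] ^ (n - 3) * cubic_factor (n - 3)"
    unfolding v_def by (rule char_poly_star_model) fact
  finally show ?thesis .
qed

section \<open>Unimodality of the coefficients\<close>

definition zchoose :: "nat \<Rightarrow> int \<Rightarrow> int" where
  "zchoose N j = (if j < 0 then 0 else int (N choose nat j))"

lemma zchoose_nonneg: "0 \<le> zchoose N j"
  by (simp add: zchoose_def)

lemma zchoose_pos: "0 \<le> j \<Longrightarrow> j \<le> int N \<Longrightarrow> 0 < zchoose N j"
  by (simp add: zchoose_def nat_le_iff)

lemma zchoose_eq_0: "int N < j \<Longrightarrow> zchoose N j = 0"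
  by (simp add: zchoose_def)

lemma coeff_binomial_power: "coeff ([:1, 1:] ^ N :: int poly) m = zchoose N (int m)"
proof (cases "m \<le> N")
  case True
  then show ?thesis
    using coeff_linear_poly_power[of m N "1 :: int" 1] by (simp add: zchoose_def)
next
  case False
  have "degree ([:1, 1:] ^ N :: int poly) = N"
    by (simp add: degree_power_eq)
  then show ?thesis
    using False by (simp add: coeff_eq_0 zchoose_def binomial_eq_0)
qed

lemma zchoose_absorption: "j * zchoose N j = (int N - j + 1) * zchoose N (j - 1)"
proof (cases "j \<le> 0")
  case True
  then show ?thesis by (cases "j = 0") (auto simp: zchoose_def)
next
  case False
  define m where "m = nat (j - 1)"
  have m: "j = int (Suc m)"
    using False by (simp add: m_def)
  have absorb: "Suc m * (N choose Suc m) = (N - m) * (N choose m)"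
    using binomial_absorption[of m N] binomial_absorb_comp[of N m] by simp
  have "int (Suc m) * int (N choose Suc m) = (int N - int m) * int (N choose m)"
  proof (cases "m \<le> N")
    case True
    then show ?thesis using absorb by (metis of_nat_diff of_nat_mult)
  qed (simp add: binomial_eq_0)
  moreover have "nat j = Suc m" "nat (j - 1) = m"
    using m by auto
  ultimately show ?thesis
    using m by (simp add: zchoose_def)
qed

lemma zchoose_increment:
  "(int N - j + 1) * (zchoose N j - zchoose N (j - 1)) = (int N - 2 * j + 1) * zchoose N j"
  using zchoose_absorption[of j N] by (simp add: algebra_simps)

lemma zchoose_mono:
  assumes "2 * j \<le> int N + 1"
  shows "zchoose N (j - 1) \<le> zchoose N j"
proof (cases "j \<le> 0")
  case True
  then show ?thesis by (simp add: zchoose_def)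
next
  case False
  have "j * zchoose N (j - 1) \<le> (int N - j + 1) * zchoose N (j - 1)"
    using assms by (intro mult_right_mono) (auto simp: zchoose_nonneg)
  then have "j * zchoose N (j - 1) \<le> j * zchoose N j"
    by (simp add: zchoose_absorption)
  then show ?thesis
    using False by simp
qed

lemma zchoose_antimono:
  assumes "int N + 1 \<le> 2 * j"
  shows "zchoose N j \<le> zchoose N (j - 1)"
proof -
  have "(int N - j + 1) * zchoose N (j - 1) \<le> j * zchoose N (j - 1)"
    using assms by (intro mult_right_mono) (auto simp: zchoose_nonneg)
  then have "j * zchoose N j \<le> j * zchoose N (j - 1)"
    by (simp add: zchoose_absorption)
  moreover have "0 < j" using assms by simp
  ultimately show ?thesis by simp
qed

definition neg_coeff :: "nat \<Rightarrow> int \<Rightarrow> int" where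
  "neg_coeff N k = (2 * int N + 4) * zchoose N (k - 2) + 7 * (int N + 1) * zchoose N (k - 1)
     + (int N + 2) * zchoose N k - zchoose N (k - 3)"

lemma coeff_binomial_cubic: "coeff ([:1, 1:] ^ N * cubic_factor N) k = - neg_coeff N (int k)"
proof -
  consider "k = 0" | "k = 1" | "k = 2" | m where "k = Suc (Suc (Suc m))"
    by (metis One_nat_def Suc_1 not0_implies_Suc)
  then have "coeff (cubic_factor N * [:1, 1:] ^ N) k = - neg_coeff N (int k)"
  proof cases
    case 4
    moreover have "int k - 1 = int (Suc (Suc m))" "int k - 2 = int (Suc m)" "int k - 3 = int m"
      using 4 by auto
    ultimately show ?thesis
      unfolding neg_coeff_def
      by (simp only:) (simp add: cubic_factor_def mult_pCons_left coeff_binomial_power algebra_simps)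
  qed (simp_all add: cubic_factor_def neg_coeff_def mult_pCons_left coeff_binomial_power zchoose_def
      numeral_2_eq_2 algebra_simps)
  then show ?thesis by (simp add: mult.commute)
qed

lemma neg_coeff_step:
  "neg_coeff N (k + 1) - neg_coeff N k =
     (2 * int N + 4) * (zchoose N (k - 1) - zchoose N (k - 2))
     + 7 * ((int N + 1) * (zchoose N k - zchoose N (k - 1)))
     + (int N + 2) * (zchoose N (k + 1) - zchoose N k)
     - (zchoose N (k - 2) - zchoose N (k - 3))"
  unfolding neg_coeff_def by (simp add: algebra_simps)

lemma neg_coeff_increasing:
  assumes k: "0 \<le> k" "2 * k + 1 \<le> int N"
  shows "neg_coeff N k < neg_coeff N (k + 1)"
proof -
  let ?c = "zchoose N"
  have mono: "?c (k - 2) \<le> ?c (k - 1)" "?c (k - 1) \<le> ?c k" "?c k \<le> ?c (k + 1)"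
    using zchoose_mono[of "k - 1" N] zchoose_mono[of k N] zchoose_mono[of "k + 1" N] k by simp_all
  have "2 * ?c k \<le> (int N - 2 * k + 1) * ?c k"
    using k by (intro mult_right_mono) (auto simp: zchoose_nonneg)
  also have "\<dots> = (int N - k + 1) * (?c k - ?c (k - 1))"
    by (rule zchoose_increment[symmetric])
  also have "\<dots> \<le> (int N + 1) * (?c k - ?c (k - 1))"
    using mono k by (intro mult_right_mono) auto
  finally have middle: "2 * ?c k \<le> (int N + 1) * (?c k - ?c (k - 1))" .
  have "0 \<le> (2 * int N + 4) * (?c (k - 1) - ?c (k - 2))" "0 \<le> (int N + 2) * (?c (k + 1) - ?c k)"
    using mono by simp_all
  moreover have "0 < ?c k" "0 \<le> ?c (k - 3)"
    using k by (simp_all add: zchoose_pos zchoose_nonneg)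
  ultimately show ?thesis
    using neg_coeff_step[of N k] middle mono by linarith
qed

text \<open>In the decreasing range the increment of the term \<open>- zchoose N (k - 3)\<close> of \<open>neg_coeff\<close>
  may have the wrong sign; this bound lets the \<open>(2N+4)\<close>-term absorb it.\<close>

lemma zchoose_le_scaled_decrement:
  assumes j: "int N + 1 < 2 * j" "j < int N"
  shows "zchoose N (j - 1) \<le> (2 * int N + 4) * (zchoose N j - zchoose N (j + 1))"
proof -
  let ?c = "zchoose N"
  define u where "u = 2 * j - int N + 1"
  define v where "v = int N - j + 1"
  have uv: "2 \<le> u" "2 \<le> v" "u + v = j + 2"
    using j by (auto simp: u_def v_def)
  have "1 * 1 \<le> (u - 1) * (v - 1)"
    using uv by (intro mult_mono) auto
  then have "j + 2 \<le> u * v"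
    using uv by (simp add: algebra_simps)
  have "j * (j + 1) \<le> (2 * int N + 4) * (j + 2)"
    using j by (intro mult_mono) auto
  also have "\<dots> \<le> (2 * int N + 4) * (u * v)"
    using \<open>j + 2 \<le> u * v\<close> by (intro mult_left_mono) auto
  finally have bound: "j * (j + 1) \<le> (2 * int N + 4) * (u * v)" .
  have F1: "j * ?c j = v * ?c (j - 1)"
    using zchoose_absorption[of j N] by (simp add: v_def)
  have F2: "(j + 1) * (?c j - ?c (j + 1)) = u * ?c j"
    using zchoose_absorption[of "j + 1" N] by (simp add: u_def algebra_simps)
  have "v * (j + 1) * ?c (j - 1) = (j * (j + 1)) * ?c j"
    using F1 by (simp add: algebra_simps)
  also have "\<dots> \<le> ((2 * int N + 4) * (u * v)) * ?c j"
    using bound by (intro mult_right_mono) (auto simp: zchoose_nonneg)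
  also have "\<dots> = (2 * int N + 4) * v * (u * ?c j)"
    by (simp only: ac_simps)
  also have "\<dots> = v * (j + 1) * ((2 * int N + 4) * (?c j - ?c (j + 1)))"
    by (simp only: F2[symmetric] ac_simps)
  finally show ?thesis
    using uv j by (simp add: mult_le_cancel_left_pos)
qed

lemma neg_coeff_decreasing:
  assumes k: "int N + 3 \<le> 2 * k" "k \<le> int N + 1"
  shows "neg_coeff N (k + 1) < neg_coeff N k"
proof -
  let ?c = "zchoose N"
  have anti: "?c (k - 1) \<le> ?c (k - 2)" "?c (k + 1) \<le> ?c k"
    using zchoose_antimono[of N "k - 1"] zchoose_antimono[of N "k + 1"] k by simp_all
  have "?c k < ?c (k - 1)"
  proof (cases "k \<le> int N")
    case True
    have "(int N - k + 1) * (?c k - ?c (k - 1)) = (int N - 2 * k + 1) * ?c k"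
      by (rule zchoose_increment)
    also have "\<dots> < 0"
      using k True zchoose_pos[of k N] by (intro mult_neg_pos) auto
    finally show ?thesis
      using True by (simp add: mult_less_0_iff)
  next
    case False
    then have "k = int N + 1" using k by simp
    then show ?thesis by (simp add: zchoose_def)
  qed
  then have middle: "(int N + 1) * (?c k - ?c (k - 1)) < 0"
    by (simp add: mult_pos_neg)
  have outer: "(2 * int N + 4) * (?c (k - 1) - ?c (k - 2)) \<le> ?c (k - 2) - ?c (k - 3)"
  proof (cases "2 * (k - 2) \<le> int N + 1")
    case True
    then have "?c (k - 3) \<le> ?c (k - 2)"
      using zchoose_mono[of "k - 2" N] by simp
    moreover have "(2 * int N + 4) * (?c (k - 1) - ?c (k - 2)) \<le> 0"
      using anti by (simp add: mult_nonneg_nonpos)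
    ultimately show ?thesis by linarith
  next
    case False
    then have "?c (k - 3) \<le> (2 * int N + 4) * (?c (k - 2) - ?c (k - 1))"
      using zchoose_le_scaled_decrement[of N "k - 2"] k by simp
    then show ?thesis
      using zchoose_nonneg[of N "k - 2"] by (simp add: algebra_simps)
  qed
  have "(int N + 2) * (?c (k + 1) - ?c k) \<le> 0"
    using anti by (simp add: mult_nonneg_nonpos)
  then show ?thesis
    using neg_coeff_step[of N k] middle outer by linarith
qed

lemma neg_coeff_nonneg:
  assumes "k \<le> int N + 2"
  shows "0 \<le> neg_coeff N k"
proof -
  let ?c = "zchoose N"
  have "?c (k - 3) \<le> (2 * int N + 4) * ?c (k - 2)"
  proof (cases "k < 3")
    case True
    then show ?thesis by (simp add: zchoose_def zchoose_nonneg)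
  next
    case False
    have "?c (k - 3) \<le> (int N - k + 3) * ?c (k - 3)"
      using assms zchoose_nonneg[of N "k - 3"] by (simp add: mult_le_cancel_right1)
    also have "\<dots> = (k - 2) * ?c (k - 2)"
      using zchoose_absorption[of "k - 2" N] by (simp add: algebra_simps)
    also have "\<dots> \<le> (2 * int N + 4) * ?c (k - 2)"
      using assms zchoose_nonneg[of N "k - 2"] by (intro mult_right_mono) auto
    finally show ?thesis .
  qed
  moreover have "0 \<le> 7 * (int N + 1) * ?c (k - 1)" "0 \<le> (int N + 2) * ?c k"
    by (auto simp: zchoose_nonneg)
  ultimately show ?thesis
    unfolding neg_coeff_def by linarith
qed

lemma neg_coeff_top: "neg_coeff N (int N + 3) = - 1" "neg_coeff N (int N + 2) = int N + 4"
proof -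
  have "int N * zchoose N (int N) = 1 * zchoose N (int N - 1)"
    using zchoose_absorption[of "int N" N] by simp
  then have "zchoose N (int N - 1) = int N"
    by (simp add: zchoose_def)
  then show "neg_coeff N (int N + 3) = - 1" "neg_coeff N (int N + 2) = int N + 4"
    unfolding neg_coeff_def by (simp_all add: zchoose_eq_0) (simp_all add: zchoose_def)
qed

lemma argmax_abs_neg_coeff:
  assumes t: "t \<le> N + 3"
    and max: "\<bar>neg_coeff N (int t)\<bar> = Max {\<bar>neg_coeff N (int k)\<bar> | k. k \<le> N + 3}"
  shows "(N + 1) div 2 \<le> t \<and> t \<le> (N + 4) div 2"
proof -
  have le_max: "\<bar>neg_coeff N (int k)\<bar> \<le> \<bar>neg_coeff N (int t)\<bar>" if "k \<le> N + 3" for k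
    unfolding max using that by (intro Max_ge) auto
  have abs_eq: "\<bar>neg_coeff N (int k)\<bar> = neg_coeff N (int k)" if "k \<le> N + 2" for k
    using neg_coeff_nonneg[of "int k" N] that by simp
  have "\<not> t < (N + 1) div 2"
  proof
    assume "t < (N + 1) div 2"
    then have "2 * t + 1 \<le> N" by presburger
    then have "neg_coeff N (int t) < neg_coeff N (int (t + 1))"
      using neg_coeff_increasing[of "int t" N] by (simp add: add.commute)
    moreover have "\<bar>neg_coeff N (int (t + 1))\<bar> \<le> \<bar>neg_coeff N (int t)\<bar>"
      using \<open>t < (N + 1) div 2\<close> by (intro le_max) auto
    ultimately show False
      using \<open>t < (N + 1) div 2\<close> abs_eq[of t] abs_eq[of "t + 1"] by simp
  qed
  moreover have "\<not> (N + 4) div 2 < t"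
  proof
    assume "(N + 4) div 2 < t"
    show False
    proof (cases "t = N + 3")
      case True
      have "\<bar>neg_coeff N (int (N + 2))\<bar> \<le> \<bar>neg_coeff N (int t)\<bar>"
        by (intro le_max) auto
      then show False
        using True neg_coeff_top[of N] by (simp add: add.commute)
    next
      case False
      then obtain k where k: "t = k + 1"
        using \<open>(N + 4) div 2 < t\<close> by (cases t) auto
      have "neg_coeff N (int k + 1) < neg_coeff N (int k)"
        using \<open>(N + 4) div 2 < t\<close> k False t by (intro neg_coeff_decreasing) auto
      moreover have "\<bar>neg_coeff N (int k)\<bar> \<le> \<bar>neg_coeff N (int t)\<bar>"
        using t k by (intro le_max) auto
      ultimately show False
        using t False k abs_eq[of k] abs_eq[of t] by (simp add: add.commute)
    qed
  qed
  ultimately show ?thesis by simp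
qed

theorem theorem5p4:
  fixes n i j t :: nat and b :: "nat \<Rightarrow> nat set"
  assumes "i < n" "j < n" "i \<noteq> j"
    and "{i, j} \<notin> star_edges n"
    and "bij_betw b {0..<n} (star_edges n \<union> {{i, j}})"
    and "t \<le> n"
    and "\<bar>coeff (char_poly (mat n n (\<lambda>(r, s). steiner2 (star_edges n) (b r) (b s)))) t\<bar>
         = Max {\<bar>coeff (char_poly (mat n n (\<lambda>(r, s). steiner2 (star_edges n) (b r) (b s)))) k\<bar>
                | k. k \<le> n}"
  shows "(n - 2) div 2 \<le> t \<and> t \<le> (n + 1) div 2"
proof -
  let ?M = "mat n n (\<lambda>(r, s). steiner2 (star_edges n) (b r) (b s))"
  have ij: "1 \<le> i" "1 \<le> j"
    using assms(1-4) by (rule non_star_edge_avoids_centre)+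
  define N where "N = n - 3"
  have n: "n = N + 3"
    using ij assms(1-3) unfolding N_def by linarith
  have "char_poly ?M = [:1, 1:] ^ N * cubic_factor N"
    unfolding N_def using ij assms(1-3,5) by (intro char_poly_steiner2_star_plus_edge)
  then have coeff: "\<bar>coeff (char_poly ?M) k\<bar> = \<bar>neg_coeff N (int k)\<bar>" for k
    by (simp add: coeff_binomial_cubic)
  have "(N + 1) div 2 \<le> t \<and> t \<le> (N + 4) div 2"
    by (rule argmax_abs_neg_coeff) (use assms(6,7) n coeff in simp_all)
  then show ?thesis
    using n by (simp add: add.commute)
qed

end
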